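(* Assume the setting described in the context (quadratic nonlinearity), and additionally $u(t)\le1$ for all $t\ge0$. Let $f_0\in F$ and $T\in(0,+\infty]$, put $\mathscr F(t):=\|f_0\|+\Xi_-(t)\,\mathcal U(t)$, and assume $4K\,\mathcal U(T)\,\mathscr F(T)\le1$. Then VP$(f_0)$ has a solution $\varphi:[0,T)\to F$ and, for all $t\in[0,T)$, $\|\varphi(t)\|\le\mathscr F(t)\,\mathcal X(4K\mathcal U(t)\mathscr F(t))$, where $\mathcal X(z):=(1-\sqrt{1-z})/(z/2)$ for $z\in(0,1]$ and $\mathcal X(0):=1$.
   Context: Banach spaces over a common field. $X\hookrightarrow Y$ means $X$ is a dense subspace of $Y$ with continuous inclusion. Setting: $F_+,F,F_-$ Banach spaces with norms $\|\cdot\|_+,\|\cdot\|,\|\cdot\|_-$, $F_+\hookrightarrow F\hookrightarrow F_-$; $\mathcal A:F_+\to F_-$ linear with $\|\cdot\|_+$ equivalent on $F_+$ to $\|f\|_-+\|\mathcal Af\|_-$; $\mathcal A$ generates a strongly continuous semigroup $(e^{t\mathcal A})_{t\ge0}$ on $F_-$ (domain $F_+$); $e^{t\mathcal A}(F)\subset F$ ($t\ge0$) with $(f,t)\mapsto e^{t\mathcal A}f$ continuous $F\times[0,\infty)\to F$ and $\|e^{t\mathcal A}f\|\le u(t)\|f\|$ for some $u\in C([0,\infty),(0,\infty))$; $e^{t\mathcal A}(F_-)\subset F$ ($t>0$) with $(f,t)\mapsto e^{t\mathcal A}f$ continuous $F_-\times(0,\infty)\to F$ and $\|e^{t\mathcal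 A}f\|\le u_-(t)\|f\|_-$ for some $u_-\in C((0,\infty),(0,\infty))$ with $u_-(t)=O(t^{-(1-\sigma)})$ as $t\to0^+$, $\sigma\in(0,1]$. $\mathscr P:F\times F\to F_-$ bilinear with $\|\mathscr P(f,g)\|_-\le K\|f\|\|g\|$, $K\in(0,\infty)$; $\xi:[0,+\infty)\to F_-$ locally Lipschitz; $\mathcal P(f,t):=\mathscr P(f,f)+\xi(t)$. $\mathcal U\in C([0,+\infty),[0,+\infty))$ nondecreasing with $\int_0^tu_-(s)\,ds\le\mathcal U(t)$ and $\mathcal U(0)=0$; $\Xi_-\in C([0,+\infty),[0,+\infty))$ nondecreasing with $\|\xi(t)\|_-\le\Xi_-(t)$; values at $+\infty$ are limits. VP$(f_0)$ asks for $\varphi\in C([0,T),F)$ with $\varphi(t)=e^{t\mathcal A}f_0+\int_0^te^{(t-s)\mathcal A}\mathcal P(\varphi(s),s)\,ds$ for $t\in[0,T)$. *)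

theory Defs
  imports "HOL-Analysis.Analysis" "HOL-Library.Landau_Symbols"
begin

definition sc_semigroup :: "(real \<Rightarrow> 'm::banach \<Rightarrow> 'm) \<Rightarrow> bool" where
  "sc_semigroup S \<longleftrightarrow>
     (\<forall>t\<ge>0. bounded_linear (S t)) \<and>
     S 0 = id \<and>
     (\<forall>t\<ge>0. \<forall>s\<ge>0. S (t + s) = S t \<circ> S s) \<and>
     (\<forall>x. continuous_on {0..} (\<lambda>t. S t x))"

definition gen_at :: "(real \<Rightarrow> 'm::real_normed_vector \<Rightarrow> 'm) \<Rightarrow> 'm \<Rightarrow> 'm \<Rightarrow> bool" where
  "gen_at S x y \<longleftrightarrow> ((\<lambda>h. (S h x - x) /\<^sub>R h) \<longlongrightarrow> y) (at_right 0)"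

definition locally_lipschitz_nonneg :: "(real \<Rightarrow> 'm::real_normed_vector) \<Rightarrow> bool" where
  "locally_lipschitz_nonneg \<xi> \<longleftrightarrow>
     (\<forall>R\<ge>0. \<exists>L. \<forall>s\<in>{0..R}. \<forall>t\<in>{0..R}. norm (\<xi> s - \<xi> t) \<le> L * \<bar>s - t\<bar>)"

text \<open>Value of a nondecreasing function at T \<in> (0,+\<infinity>]; at +\<infinity> it is the limit (= supremum).\<close>
definition ext_val :: "(real \<Rightarrow> real) \<Rightarrow> ereal \<Rightarrow> ereal" where
  "ext_val g T = (if T = \<infinity> then (SUP t\<in>{0..}. ereal (g t)) else ereal (g (real_of_ereal T)))"

definition chiX :: "real \<Rightarrow> real" where
  "chiX z = (if z = 0 then 1 else (1 - sqrt (1 - z)) / (z / 2))"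

end

theory Submission
  imports Defs
begin

text \<open>The solution is the limit of the Picard iterates
  \<open>\<phi>(n+1)(t) = e^(tA) f0 + \<integral>[0,t] e^((t-s)A) (P(\<phi>(n)(s), \<phi>(n)(s)) + \<xi>(s)) ds\<close>,
  \<open>\<phi>(0) = 0\<close>. As \<open>e^(tA)\<close> is a contraction on the space \<open>F\<close> and the smoothing estimate
  integrates to \<open>U\<close>, on \<open>[0, b]\<close> the sup norms of \<open>\<phi>(n)\<close> and of \<open>\<phi>(n+1) - \<phi>(n)\<close> are
  dominated by the scalar recursion \<open>m(n+1) = D + K U(b) m(n)^2\<close>, \<open>m(0) = 0\<close>, where
  \<open>D = norm f0 + Xi(b) U(b)\<close>, and by its increments \<open>m(n+1) - m(n)\<close> respectively; for the
  increments one uses \<open>P(a,a) - P(c,c) = P(a, a-c) + P(a-c, c)\<close>. When \<open>4 K U(b) D \<le> 1\<close> the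
  recursion increases to the smallest root \<open>D chiX(4 K U(b) D)\<close> of \<open>K U(b) x^2 - x + D = 0\<close>,
  so the iterates converge uniformly and the limit is a mild solution obeying that bound.
  The weak singularity \<open>u_-(t) = O(t^(\<sigma>-1))\<close> makes the Duhamel integral converge; its
  continuity in \<open>t\<close> follows by cutting the kernel off near \<open>0\<close>.\<close>

section \<open>Integrals on real intervals\<close>

lemma has_integral_reflect_Icc:
  fixes f :: "real \<Rightarrow> 'a::banach"
  assumes "(f has_integral I) {0..t}"
  shows "((\<lambda>s. f (t - s)) has_integral I) {0..t}"
proof -
  have "((\<lambda>x. f (- x)) has_integral I) {-t..-0}"
    using has_integral_reflect_real[of f I 0 t] assms by blast
  from has_integral_shift_real_ivl[OF this, of "-t"] show ?thesis by simp
qed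

lemma uniformly_continuous_on_integral_Icc_lower:
  fixes f :: "real \<Rightarrow> 'a::banach"
  assumes cf: "continuous_on {a<..b} f"
    and bd: "\<And>x. x \<in> {a<..b} \<Longrightarrow> norm (f x) \<le> g x" and gi: "g integrable_on {a..b}"
  shows "uniformly_continuous_on {a<..b} (\<lambda>c. integral {c..b} f)"
proof -
  define G where "G = (\<lambda>c. integral {c..b} f)"
  define Ig where "Ig = (\<lambda>c. integral {c..b} g)"
  have fi: "f integrable_on {c..d}" if "a < c" "d \<le> b" for c d
    by (rule integrable_continuous_interval, rule continuous_on_subset[OF cf]) (use that in auto)
  have gii: "g integrable_on {c..d}" if "a \<le> c" "d \<le> b" for c d
    by (rule integrable_subinterval_real[OF gi]) (use that in auto)
  have key: "dist (G c) (G d) \<le> dist (Ig c) (Ig d)" if "a < c" "c \<le> d" "d \<le> b" for c d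
  proof -
    have "G c = integral {c..d} f + G d" unfolding G_def
      by (rule Henstock_Kurzweil_Integration.integral_combine[symmetric]) (use that fi in auto)
    moreover have "Ig c = integral {c..d} g + Ig d" unfolding Ig_def
      by (rule Henstock_Kurzweil_Integration.integral_combine[symmetric]) (use that gii in auto)
    moreover have "norm (integral {c..d} f) \<le> integral {c..d} g"
      by (rule integral_norm_bound_integral) (use that fi gii bd in auto)
    ultimately show ?thesis by (simp add: dist_norm)
  qed
  have "continuous_on {a..b} Ig" unfolding Ig_def
    by (rule indefinite_integral_continuous_1'[OF gi])
  then have ucI: "uniformly_continuous_on {a..b} Ig"
    by (simp add: compact_uniformly_continuous)
  have "uniformly_continuous_on {a<..b} G"
    unfolding uniformly_continuous_on_def
  proof (intro allI impI)
    fix e :: real assume "e > 0"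
    then obtain d where d: "d > 0" "\<forall>x\<in>{a..b}. \<forall>x'\<in>{a..b}. dist x' x < d \<longrightarrow> dist (Ig x') (Ig x) < e"
      using ucI unfolding uniformly_continuous_on_def by metis
    have "dist (G x') (G x) < e" if "x \<in> {a<..b}" "x' \<in> {a<..b}" "dist x' x < d" for x x'
    proof -
      have "dist (G x') (G x) \<le> dist (Ig x') (Ig x)"
        using key[of x x'] key[of x' x] that by (cases "x \<le> x'") (auto simp: dist_commute)
      also have "\<dots> < e" using d(2) that by auto
      finally show ?thesis .
    qed
    with d(1) show "\<exists>d>0. \<forall>x\<in>{a<..b}. \<forall>x'\<in>{a<..b}. dist x' x < d \<longrightarrow> dist (G x') (G x) < e"
      by blast
  qed
  then show ?thesis by (simp only: G_def)
qed

lemma integrable_on_Icc_if_continuous_on_Ioc_dominated: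
  fixes f :: "real \<Rightarrow> 'a::banach"
  assumes ab: "a \<le> b" and cf: "continuous_on {a<..b} f"
    and bd: "\<And>x. x \<in> {a<..b} \<Longrightarrow> norm (f x) \<le> g x" and gi: "g integrable_on {a..b}"
  shows "f integrable_on {a..b}"
proof (cases "a = b")
  case True then show ?thesis by (metis integrable_on_refl interval_cbox)
next
  case False
  with ab have ab: "a < b" by simp
  obtain H where H: "uniformly_continuous_on (closure {a<..b}) H"
      "\<And>c. c \<in> {a<..b} \<Longrightarrow> integral {c..b} f = H c"
    using uniformly_continuous_on_extension_on_closure
      [OF uniformly_continuous_on_integral_Icc_lower[OF cf bd gi]] by metis
  have cH: "continuous_on {a..b} H"
    using H(1) ab by (simp add: uniformly_continuous_imp_continuous)
  have dH: "(H has_vector_derivative - f x) (at x)" if x: "x \<in> {a<..<b}" for x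
  proof -
    define c where "c = (a + x) / 2"
    have c: "a < c" "c < x" using x by (auto simp: c_def)
    have "((\<lambda>u. integral {u..b} f) has_vector_derivative - f x) (at x within {c..b})"
      by (rule integral_has_vector_derivative') (rule continuous_on_subset[OF cf], use c x in auto)
    then have "((\<lambda>u. integral {u..b} f) has_vector_derivative - f x) (at x within {c<..<b})"
      by (rule has_vector_derivative_within_subset) auto
    then have "((\<lambda>u. integral {u..b} f) has_vector_derivative - f x) (at x)"
      using at_within_open[of x "{c<..<b}"] c x by auto
    then show ?thesis
      by (rule has_vector_derivative_transform_within_open[of _ _ _ "{a<..<b}"]) (use x H(2) in auto)
  qed
  have "((\<lambda>x. - f x) has_integral H b - H a) {a..b}"
    by (rule fundamental_theorem_of_calculus_interior_strong[of "{}"]) (use ab dH cH in auto)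
  moreover have "H b = 0" using H(2)[of b] ab by simp
  ultimately have "(f has_integral H a) {a..b}"
    by (simp add: has_integral_neg_iff)
  then show ?thesis by blast
qed

lemma bigo_powr_at_right_0_bound:
  fixes w :: "real \<Rightarrow> real"
  assumes "w \<in> O[at_right 0](\<lambda>t. t powr (\<sigma> - 1))"
  obtains c \<delta> where "c > 0" "\<delta> > 0" "\<And>x. 0 < x \<Longrightarrow> x < \<delta> \<Longrightarrow> \<bar>w x\<bar> \<le> c * x powr (\<sigma> - 1)"
proof -
  obtain c where c: "c > 0" "eventually (\<lambda>x. norm (w x) \<le> c * norm (x powr (\<sigma> - 1))) (at_right 0)"
    using assms by (elim landau_o.bigE)
  then obtain \<delta> where "\<delta> > 0" "\<And>x. 0 < x \<Longrightarrow> x < \<delta> \<Longrightarrow> norm (w x) \<le> c * norm (x powr (\<sigma> - 1))"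
    unfolding eventually_at_right_field by auto
  with c(1) show ?thesis by (intro that[of c \<delta>]) auto
qed

lemma bigo_powr_integrable_on_Icc:
  fixes w :: "real \<Rightarrow> real"
  assumes w: "continuous_on {0<..} w" and \<sigma>: "0 < \<sigma>"
    and O: "w \<in> O[at_right 0](\<lambda>t. t powr (\<sigma> - 1))" and t: "0 \<le> t"
  shows "w integrable_on {0..t}"
proof -
  obtain c \<delta> where c: "c > 0" "\<delta> > 0" "\<And>x. 0 < x \<Longrightarrow> x < \<delta> \<Longrightarrow> \<bar>w x\<bar> \<le> c * x powr (\<sigma> - 1)"
    using bigo_powr_at_right_0_bound[OF O] by blast
  define d where "d = \<delta> / 2"
  have d: "0 < d" "d < \<delta>" using c by (auto simp: d_def)
  have "((\<lambda>x. x powr (\<sigma> - 1)) has_integral (d powr (\<sigma> - 1 + 1) / (\<sigma> - 1 + 1))) {0..d}"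
    by (rule has_integral_powr_from_0) (use \<sigma> d in auto)
  then have "(\<lambda>x. c * x powr (\<sigma> - 1)) integrable_on {0..d}"
    by (intro integrable_on_mult_right) blast
  then have near_0: "w integrable_on {0..d}"
    by (rule integrable_on_Icc_if_continuous_on_Ioc_dominated[rotated 3])
       (use c d in \<open>auto intro: continuous_on_subset[OF w]\<close>)
  show ?thesis
  proof (cases "t \<le> d")
    case True then show ?thesis using t by (intro integrable_subinterval_real[OF near_0]) auto
  next
    case False
    have "w integrable_on {d..t}"
      by (rule integrable_continuous_interval, rule continuous_on_subset[OF w]) (use d in auto)
    with near_0 False d show ?thesis
      using Henstock_Kurzweil_Integration.integrable_combine[of 0 d t w] by auto
  qed
qed

lemma bigo_powr_tendsto_mult_0:
  fixes w :: "real \<Rightarrow> real"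
  assumes \<sigma>: "0 < \<sigma>" and O: "w \<in> O[at_right 0](\<lambda>t. t powr (\<sigma> - 1))"
  shows "((\<lambda>d. d * w d) \<longlongrightarrow> 0) (at_right 0)"
proof -
  obtain c \<delta> where c: "c > 0" "\<delta> > 0" "\<And>x. 0 < x \<Longrightarrow> x < \<delta> \<Longrightarrow> \<bar>w x\<bar> \<le> c * x powr (\<sigma> - 1)"
    using bigo_powr_at_right_0_bound[OF O] by blast
  have "((\<lambda>d::real. d powr \<sigma>) \<longlongrightarrow> 0) (at_right 0)"
    by (rule tendsto_zero_powrI[where b=\<sigma>])
       (auto simp: \<sigma> eventually_at_right_field intro: exI[of _ 1])
  moreover have "\<forall>\<^sub>F d in at_right 0. norm (d * w d) \<le> norm (d powr \<sigma>) * c"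
    unfolding eventually_at_right_field
  proof (intro exI[of _ \<delta>] conjI allI impI)
    fix d :: real assume d: "0 < d" "d < \<delta>"
    have "norm (d * w d) \<le> d * (c * d powr (\<sigma> - 1))" using c(3)[OF d] d by (simp add: abs_mult)
    also have "\<dots> = norm (d powr \<sigma>) * c" using d by (simp add: powr_diff)
    finally show "norm (d * w d) \<le> norm (d powr \<sigma>) * c" .
  qed (use c in auto)
  ultimately show ?thesis by (rule tendsto_0_le)
qed

lemma integral_Icc_0_rescale:
  fixes f :: "real \<Rightarrow> 'a::real_normed_vector"
  assumes "0 \<le> t"
  shows "integral {0..t} f = t *\<^sub>R integral {0..1} (\<lambda>s. f (t * s))"
proof (cases "t = 0")
  case False
  with assms have t: "t > 0" by simp
  have "(\<lambda>x. x / t) ` {0..t} = {0..1}"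
    using t by (auto simp: image_iff field_simps intro!: bexI[of _ "t * _"])
  then show ?thesis
    using integral_stretch_real[of t 0 t f] t by simp
qed simp

lemma continuous_on_parametric_integral_Icc_0:
  fixes f :: "real \<Rightarrow> real \<Rightarrow> 'a::banach"
  assumes f: "continuous_on ({0..b} \<times> {0..b}) (\<lambda>(t, r). f t r)"
  shows "continuous_on {0..b} (\<lambda>t. integral {0..t} (f t))"
proof -
  have "continuous_on ({0..b} \<times> cbox 0 1) (\<lambda>p. (\<lambda>(t, r). f t r) (fst p, fst p * snd p))"
  proof (rule continuous_on_compose2[OF f])
    show "continuous_on ({0..b} \<times> cbox 0 1) (\<lambda>p. (fst p, fst p * snd p))"
      by (intro continuous_intros)
    show "(\<lambda>p. (fst p, fst p * snd p)) ` ({0..b} \<times> cbox 0 1) \<subseteq> {0..b} \<times> {0..b}"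
    proof
      fix q assume "q \<in> (\<lambda>p. (fst p, fst p * snd p)) ` ({0..b} \<times> cbox 0 1)"
      then obtain t s where t: "t \<in> {0..b}" and "s \<in> {0..1}" and q: "q = (t, t * s)"
        by auto
      then have "0 \<le> t * s" "t * s \<le> t" by (auto intro: mult_left_le)
      with t show "q \<in> {0..b} \<times> {0..b}" by (simp add: q)
    qed
  qed
  then have "continuous_on ({0..b} \<times> cbox 0 1) (\<lambda>(t, s). f t (t * s))"
    by (simp add: case_prod_beta)
  then have "continuous_on {0..b} (\<lambda>t. integral (cbox 0 1) (\<lambda>s. f t (t * s)))"
    by (rule integral_continuous_on_param)
  then have "continuous_on {0..b} (\<lambda>t. t *\<^sub>R integral {0..1} (\<lambda>s. f t (t * s)))"
    by (auto intro!: continuous_intros)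
  moreover have "integral {0..t} (f t) = t *\<^sub>R integral {0..1} (\<lambda>s. f t (t * s))"
    if "t \<in> {0..b}" for t
    by (rule integral_Icc_0_rescale) (use that in simp)
  ultimately show ?thesis
    using continuous_on_cong[of "{0..b}" "{0..b}" "\<lambda>t. integral {0..t} (f t)"] by simp
qed

lemma continuous_on_Icc_norm_bounded:
  fixes h :: "real \<Rightarrow> 'a::real_normed_vector"
  assumes "continuous_on {a..b} h"
  obtains H where "\<And>s. s \<in> {a..b} \<Longrightarrow> norm (h s) \<le> H"
  using compact_imp_bounded[OF compact_continuous_image[OF assms compact_Icc]]
  unfolding bounded_iff by (metis imageI)

lemma continuous_on_if_continuous_on_initial_segments:
  fixes f :: "real \<Rightarrow> 'a::topological_space"
  assumes "\<And>t. t \<in> D \<Longrightarrow> \<exists>b>t. D \<inter> {..<b} = {0..<b} \<and> continuous_on {0..b} f"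
  shows "continuous_on D f"
  unfolding continuous_on_eq_continuous_within
proof
  fix t assume "t \<in> D"
  then obtain b where b: "t < b" "D \<inter> {..<b} = {0..<b}" "continuous_on {0..b} f"
    using assms by blast
  have "t \<in> D \<inter> {..<b}" using \<open>t \<in> D\<close> b(1) by simp
  then have "t \<in> {0..b}" unfolding b(2) by simp
  with b(3) have "continuous (at t within {0..b}) f"
    by (simp add: continuous_on_eq_continuous_within)
  moreover have "D \<inter> {..<b} - {t} = {0..b} \<inter> {..<b} - {t}"
    unfolding b(2) by auto
  then have "at t within D = at t within {0..b}"
    by (rule at_within_nhd[of _ "{..<b}", rotated 2]) (use b(1) in simp_all)
  ultimately show "continuous (at t within D) f" by simp
qed

section \<open>The scalar majorant\<close>

lemma chiX_nonneg:
  assumes "0 \<le> z" "z \<le> 1"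
  shows "0 \<le> chiX z"
  using assms by (auto simp: chiX_def real_sqrt_le_1_iff intro!: divide_nonneg_pos)

lemma chiX_fixed_point:
  fixes a F :: real
  assumes a: "0 \<le> a" and F: "0 \<le> F" and z: "4 * a * F \<le> 1"
  shows "F + a * (F * chiX (4 * a * F))^2 = F * chiX (4 * a * F)"
proof (cases "a = 0 \<or> F = 0")
  case True
  then show ?thesis by (auto simp: chiX_def)
next
  case False
  then have a: "a > 0" and F: "F > 0" using a F by auto
  define w where "w = sqrt (1 - 4 * a * F)"
  have w2: "w^2 = 1 - 4 * a * F" using z by (simp add: w_def)
  have "F * chiX (4 * a * F) = (1 - w) / (2 * a)"
    using a F by (simp add: chiX_def w_def field_simps)
  moreover have "F + a * ((1 - w) / (2 * a))^2 = (1 - w) / (2 * a)"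
    using a w2 by (simp add: field_simps power2_eq_square) algebra
  ultimately show ?thesis by simp
qed

definition quad_iter :: "real \<Rightarrow> real \<Rightarrow> nat \<Rightarrow> real" where
  "quad_iter F a n = ((\<lambda>x. F + a * x^2) ^^ n) 0"

lemma quad_iter_0 [simp]: "quad_iter F a 0 = 0"
  by (simp add: quad_iter_def)

lemma quad_iter_Suc: "quad_iter F a (Suc n) = F + a * (quad_iter F a n)^2"
  by (simp add: quad_iter_def)

context
  fixes F a :: real
  assumes F: "0 \<le> F" and a: "0 \<le> a"
begin

lemma quad_iter_nonneg: "0 \<le> quad_iter F a n"
  by (induction n) (simp_all add: quad_iter_Suc F a)

lemma quad_iter_le_Suc: "quad_iter F a n \<le> quad_iter F a (Suc n)"
proof (induction n)
  case (Suc n)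
  then have "(quad_iter F a n)^2 \<le> (quad_iter F a (Suc n))^2"
    by (intro power_mono quad_iter_nonneg)
  then have "a * (quad_iter F a n)^2 \<le> a * (quad_iter F a (Suc n))^2"
    using a by (rule mult_left_mono)
  then show ?case unfolding quad_iter_Suc[of F a "Suc n"] quad_iter_Suc[of F a n] by simp
qed (simp add: quad_iter_Suc F)

lemma quad_iter_le_supersolution:
  assumes M: "0 \<le> M" "F + a * M^2 \<le> M"
  shows "quad_iter F a n \<le> M"
proof (induction n)
  case (Suc n)
  then have "a * (quad_iter F a n)^2 \<le> a * M^2"
    by (intro mult_left_mono power_mono quad_iter_nonneg a)
  then show ?case using M by (simp add: quad_iter_Suc)
qed (simp add: M)

lemma quad_iter_le_chiX:
  assumes "4 * a * F \<le> 1"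
  shows "quad_iter F a n \<le> F * chiX (4 * a * F)"
  by (rule quad_iter_le_supersolution)
     (use assms F a chiX_fixed_point[OF a F assms] chiX_nonneg[of "4 * a * F"] in simp_all)

lemma convergent_quad_iter:
  assumes "4 * a * F \<le> 1"
  shows "convergent (quad_iter F a)"
proof -
  have "incseq (quad_iter F a)" by (rule incseq_SucI) (rule quad_iter_le_Suc)
  then obtain L where "quad_iter F a \<longlonglongrightarrow> L"
    using incseq_convergent[of _ "F * chiX (4 * a * F)"] quad_iter_le_chiX[OF assms] by blast
  then show ?thesis by (auto simp: convergent_def)
qed

end

lemma uniform_limit_if_increments_telescope:
  fixes g :: "nat \<Rightarrow> 'a \<Rightarrow> 'b::banach"
  assumes inc: "\<And>n x. x \<in> X \<Longrightarrow> norm (g (Suc n) x - g n x) \<le> m (Suc n) - m n"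
    and m: "convergent m"
  shows "uniform_limit X g (\<lambda>x. lim (\<lambda>n. g n x)) sequentially"
proof -
  have tele: "dist (g k x) (g n x) \<le> m k - m n" if "x \<in> X" "n \<le> k" for x n k
    using \<open>n \<le> k\<close>
  proof (induction k rule: dec_induct)
    case (step k)
    have "dist (g (Suc k) x) (g n x) \<le> dist (g (Suc k) x) (g k x) + dist (g k x) (g n x)"
      by (rule dist_triangle)
    also have "\<dots> \<le> (m (Suc k) - m k) + (m k - m n)"
      using inc[OF \<open>x \<in> X\<close>, of k] step.IH by (intro add_mono) (simp_all add: dist_norm)
    finally show ?case by simp
  qed simp
  have "uniformly_Cauchy_on X g"
  proof (rule uniformly_Cauchy_onI)
    fix e :: real assume "e > 0"
    then obtain M where M: "\<And>k n. k \<ge> M \<Longrightarrow> n \<ge> M \<Longrightarrow> dist (m k) (m n) < e"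
      using m unfolding Cauchy_convergent_iff[symmetric] Cauchy_def by metis
    have "dist (g k x) (g n x) < e" if "x \<in> X" "k \<ge> M" "n \<ge> M" for x k n
    proof (cases "n \<le> k")
      case True
      then show ?thesis using tele[OF \<open>x \<in> X\<close> True] M[OF that(2,3)] by (simp add: dist_real_def)
    next
      case False
      then have "dist (g n x) (g k x) \<le> m n - m k" using tele[OF \<open>x \<in> X\<close>] by simp
      then show ?thesis using M[OF that(3,2)] by (simp add: dist_real_def dist_commute)
    qed
    then show "\<exists>M. \<forall>x\<in>X. \<forall>k\<ge>M. \<forall>n\<ge>M. dist (g k x) (g n x) < e" by blast
  qed
  then show ?thesis
    using Cauchy_uniformly_convergent uniformly_convergent_uniform_limit_iff by blast
qed

section \<open>Convolution with a weakly singular kernel\<close>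

locale smoothing_kernel =
  fixes Sm :: "real \<Rightarrow> 'm::real_normed_vector \<Rightarrow> 'f::banach"
    and w :: "real \<Rightarrow> real"
    and \<sigma> :: real
  assumes Sm_linear: "\<And>t. t > 0 \<Longrightarrow> linear (Sm t)"
    and Sm_continuous: "continuous_on (UNIV \<times> {0<..}) (\<lambda>(f, t). Sm t f)"
    and Sm_bound: "\<And>t f. t > 0 \<Longrightarrow> norm (Sm t f) \<le> w t * norm f"
    and w_continuous: "continuous_on {0<..} w"
    and w_nonneg: "\<And>t. t > 0 \<Longrightarrow> 0 \<le> w t"
    and \<sigma>_pos: "0 < \<sigma>"
    and w_bigo: "w \<in> O[at_right 0](\<lambda>t. t powr (\<sigma> - 1))"
begin

definition kernel :: "real \<Rightarrow> 'm \<Rightarrow> 'f" where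
  "kernel r = (if 0 < r then Sm r else (\<lambda>_. 0))"

definition duhamel :: "(real \<Rightarrow> 'm) \<Rightarrow> real \<Rightarrow> 'f" where
  "duhamel h t = integral {0..t} (\<lambda>r. kernel r (h (t - r)))"

lemma kernel_linear: "linear (kernel r)"
  by (cases "0 < r") (simp_all add: kernel_def Sm_linear linear_zero)

lemma w_integrable: "0 \<le> t \<Longrightarrow> w integrable_on {0..t}"
  using bigo_powr_integrable_on_Icc[OF w_continuous \<sigma>_pos w_bigo] .

lemma integral_w_mono:
  assumes "0 \<le> a" "a \<le> b"
  shows "integral {0..a} w \<le> integral {0..b} w"
proof -
  have "integral {0..a} w + integral {a..b} w = integral {0..b} w"
    by (rule Henstock_Kurzweil_Integration.integral_combine) (use assms w_integrable in auto)
  moreover have "w integrable_on {a..b}"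
    by (rule integrable_subinterval_real[OF w_integrable[of b]]) (use assms in auto)
  then have "((\<lambda>x. if x = 0 then 0 else w x) has_integral integral {a..b} w) {a..b}"
    by (intro has_integral_spike_finite[of "{0}", OF _ _ integrable_integral]) auto
  then have "0 \<le> integral {a..b} w"
    by (rule has_integral_nonneg) (use assms w_nonneg in \<open>auto simp: less_le\<close>)
  ultimately show ?thesis by linarith
qed

lemma continuous_on_kernel_integrand:
  assumes h: "continuous_on {0..t} h"
  shows "continuous_on {0<..t} (\<lambda>r. kernel r (h (t - r)))"
proof -
  have "continuous_on {0<..t} (\<lambda>r. h (t - r))"
    by (rule continuous_on_compose2[OF h]) (auto intro!: continuous_intros)
  then have "continuous_on {0<..t} (\<lambda>r. (\<lambda>(f, t). Sm t f) (h (t - r), r))"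
    by (intro continuous_on_compose2[OF Sm_continuous]) (auto intro!: continuous_intros)
  then show ?thesis
    by (rule continuous_on_cong[THEN iffD1, rotated 2]) (auto simp: kernel_def)
qed

lemma kernel_integrand_integrable_bound:
  assumes c: "0 \<le> c" "c \<le> t" and h: "continuous_on {0..t} h"
    and H: "\<And>s. s \<in> {0..t} \<Longrightarrow> norm (h s) \<le> H"
  shows "(\<lambda>r. kernel r (h (t - r))) integrable_on {0..c}"
    and "norm (integral {0..c} (\<lambda>r. kernel r (h (t - r)))) \<le> H * integral {0..c} w"
proof -
  have bd: "norm (kernel r (h (t - r))) \<le> w r * H" if "r \<in> {0<..c}" for r
  proof -
    have "norm (kernel r (h (t - r))) \<le> w r * norm (h (t - r))"
      using that by (simp add: kernel_def Sm_bound)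
    also have "\<dots> \<le> w r * H" using that c w_nonneg[of r] by (intro mult_left_mono H) auto
    finally show ?thesis .
  qed
  have wi: "(\<lambda>r. w r * H) integrable_on {0..c}"
    using w_integrable[OF c(1)] by (rule integrable_on_mult_left)
  show i: "(\<lambda>r. kernel r (h (t - r))) integrable_on {0..c}"
    by (rule integrable_on_Icc_if_continuous_on_Ioc_dominated[OF c(1) _ bd wi])
       (rule continuous_on_subset[OF continuous_on_kernel_integrand[OF h]], use c in auto)
  have "norm (integral {0..c} (\<lambda>r. kernel r (h (t - r))))
      \<le> integral {0..c} (\<lambda>r. if r = 0 then 0 else w r * H)"
  proof (rule integral_norm_bound_integral[OF i])
    show "(\<lambda>r. if r = 0 then 0 else w r * H) integrable_on {0..c}"
      by (rule integrable_spike[OF wi, of "{0}"]) auto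
    show "norm (kernel r (h (t - r))) \<le> (if r = 0 then 0 else w r * H)" if "r \<in> {0..c}" for r
      using bd[of r] that by (auto simp: kernel_def)
  qed
  also have "\<dots> = integral {0..c} (\<lambda>r. w r * H)"
    by (rule integral_spike[of "{0}"]) auto
  also have "\<dots> = H * integral {0..c} w" by simp
  finally show "norm (integral {0..c} (\<lambda>r. kernel r (h (t - r)))) \<le> H * integral {0..c} w" .
qed

lemma integrable_kernel_integrand:
  assumes "0 \<le> c" "c \<le> t" and h: "continuous_on {0..t} h"
  shows "(\<lambda>r. kernel r (h (t - r))) integrable_on {0..c}"
proof -
  obtain H where "\<And>s. s \<in> {0..t} \<Longrightarrow> norm (h s) \<le> H"
    using continuous_on_Icc_norm_bounded[OF h] by blast
  then show ?thesis using kernel_integrand_integrable_bound(1)[OF assms] by blast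
qed

lemma norm_duhamel_le:
  assumes "0 \<le> t" "continuous_on {0..t} h" "\<And>s. s \<in> {0..t} \<Longrightarrow> norm (h s) \<le> H"
  shows "norm (duhamel h t) \<le> H * integral {0..t} w"
  unfolding duhamel_def using kernel_integrand_integrable_bound(2)[OF _ order.refl] assms by blast

lemma duhamel_diff:
  assumes "0 \<le> t" "continuous_on {0..t} h1" "continuous_on {0..t} h2"
  shows "duhamel h1 t - duhamel h2 t = duhamel (\<lambda>s. h1 s - h2 s) t"
  unfolding duhamel_def
  using integral_diff[OF integrable_kernel_integrand[OF assms(1) order.refl assms(2)]
                         integrable_kernel_integrand[OF assms(1) order.refl assms(3)]]
  by (simp add: linear_diff[OF kernel_linear])

lemma duhamel_tendsto_if_uniform_limit:
  assumes t: "0 \<le> t" and h: "\<And>n. continuous_on {0..t} (g n)" "continuous_on {0..t} h"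
    and lim: "uniform_limit {0..t} g h sequentially"
  shows "(\<lambda>n. duhamel (g n) t) \<longlonglongrightarrow> duhamel h t"
proof (rule tendstoI)
  fix e :: real assume "e > 0"
  define I where "I = integral {0..t} w + 1"
  have I: "integral {0..t} w < I" "0 < I"
    using integral_w_mono[OF order.refl t] by (simp_all add: I_def)
  have "\<forall>\<^sub>F n in sequentially. \<forall>s\<in>{0..t}. dist (g n s) (h s) < e / I"
    using uniform_limitD[OF lim] \<open>e > 0\<close> I by simp
  then show "\<forall>\<^sub>F n in sequentially. dist (duhamel (g n) t) (duhamel h t) < e"
  proof eventually_elim
    case (elim n)
    have "dist (duhamel (g n) t) (duhamel h t) = norm (duhamel (\<lambda>s. g n s - h s) t)"
      by (simp add: dist_norm duhamel_diff[OF t h(1) h(2)])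
    also have "\<dots> \<le> e / I * integral {0..t} w"
      by (rule norm_duhamel_le)
         (use t h elim in \<open>auto intro!: continuous_intros less_imp_le simp: dist_norm\<close>)
    also have "\<dots> < e / I * I"
      using I \<open>e > 0\<close> by (intro mult_strict_left_mono) auto
    finally show ?case using I by simp
  qed
qed

lemma w_tendsto_0: "((\<lambda>d. integral {0..d} w + d * w d) \<longlongrightarrow> 0) (at_right 0)"
proof -
  have "continuous_on {0..1} (\<lambda>x. integral {0..x} w)"
    by (rule indefinite_integral_continuous_1[OF w_integrable]) simp
  then have "((\<lambda>x. integral {0..x} w) \<longlongrightarrow> integral {0..0} w) (at 0 within {0..1})"
    unfolding continuous_on_def by (elim ballE[of _ _ 0]) auto
  then have "((\<lambda>x. integral {0..x} w) \<longlongrightarrow> 0) (at_right 0)"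
    by (simp add: at_within_Icc_at_right)
  then show ?thesis
    using tendsto_add[OF _ bigo_powr_tendsto_mult_0[OF \<sigma>_pos w_bigo]] by simp
qed

text \<open>Cutting the kernel off at \<open>d > 0\<close> removes its singularity at \<open>r = 0\<close>, which makes the
  integrand jointly continuous in \<open>(t, r)\<close>.\<close>

definition truncated_duhamel :: "real \<Rightarrow> (real \<Rightarrow> 'm) \<Rightarrow> real \<Rightarrow> 'f" where
  "truncated_duhamel d h t = integral {0..t} (\<lambda>r. Sm (max r d) (h (max 0 (t - r))))"

lemma continuous_on_truncated_integrand:
  assumes d: "d > 0" and h: "continuous_on {0..b} h"
  shows "continuous_on ({0..b} \<times> {0..b}) (\<lambda>(t, r). Sm (max r d) (h (max 0 (t - r))))"
proof -
  have "continuous_on ({0..b} \<times> {0..b}) (\<lambda>p. h (max 0 (fst p - snd p)))"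
    by (rule continuous_on_compose2[OF h]) (auto intro!: continuous_intros)
  then have "continuous_on ({0..b} \<times> {0..b})
      (\<lambda>p. (\<lambda>(f, t). Sm t f) (h (max 0 (fst p - snd p)), max (snd p) d))"
    by (intro continuous_on_compose2[OF Sm_continuous]) (use d in \<open>auto intro!: continuous_intros\<close>)
  then show ?thesis by (simp add: case_prod_beta')
qed

lemma continuous_on_truncated_duhamel:
  assumes "d > 0" "continuous_on {0..b} h"
  shows "continuous_on {0..b} (truncated_duhamel d h)"
  unfolding truncated_duhamel_def
  by (rule continuous_on_parametric_integral_Icc_0[OF continuous_on_truncated_integrand[OF assms]])

lemma truncated_integrand_integrable:
  assumes "d > 0" "t \<in> {0..b}" "continuous_on {0..b} h"
  shows "(\<lambda>r. Sm (max r d) (h (max 0 (t - r)))) integrable_on {0..t}"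
proof -
  have "continuous_on {0..b} (\<lambda>r. (\<lambda>(t, r). Sm (max r d) (h (max 0 (t - r)))) (t, r))"
    by (rule continuous_on_compose2[OF continuous_on_truncated_integrand[OF assms(1,3)]])
       (use assms(2) in \<open>auto intro!: continuous_intros\<close>)
  then show ?thesis
    by (intro integrable_continuous_interval) (use assms(2) in \<open>auto elim: continuous_on_subset\<close>)
qed

lemma norm_integral_truncated_integrand_le:
  assumes d: "d > 0" and c: "0 \<le> c" "c \<le> d" "c \<le> t" and t: "t \<in> {0..b}"
    and h: "continuous_on {0..b} h" and H: "\<And>s. s \<in> {0..b} \<Longrightarrow> norm (h s) \<le> H"
  shows "norm (integral {0..c} (\<lambda>r. Sm (max r d) (h (max 0 (t - r))))) \<le> d * w d * H"
proof -
  have H0: "0 \<le> H" using H[of t] t norm_ge_zero order.trans by blast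
  have "norm (integral {0..c} (\<lambda>r. Sm (max r d) (h (max 0 (t - r))))) \<le> integral {0..c} (\<lambda>r. w d * H)"
  proof (rule integral_norm_bound_integral)
    show "(\<lambda>r. Sm (max r d) (h (max 0 (t - r)))) integrable_on {0..c}"
      by (rule integrable_subinterval_real[OF truncated_integrand_integrable[OF d t h]]) (use c in auto)
    fix r assume r: "r \<in> {0..c}"
    then have "norm (Sm (max r d) (h (max 0 (t - r)))) \<le> w d * norm (h (max 0 (t - r)))"
      using c Sm_bound[OF d] by (simp add: max_absorb2)
    also have "\<dots> \<le> w d * H" using w_nonneg[OF d] r c t by (intro mult_left_mono H) auto
    finally show "norm (Sm (max r d) (h (max 0 (t - r)))) \<le> w d * H" .
  qed (rule integrable_const_ivl)
  also have "\<dots> = c * (w d * H)" using c by simp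
  also have "\<dots> \<le> d * (w d * H)" using c w_nonneg[OF d] H0 by (intro mult_right_mono) auto
  finally show ?thesis by simp
qed

lemma truncated_duhamel_error:
  assumes d: "d > 0" and t: "t \<in> {0..b}" and h: "continuous_on {0..b} h"
    and H: "\<And>s. s \<in> {0..b} \<Longrightarrow> norm (h s) \<le> H"
  shows "norm (duhamel h t - truncated_duhamel d h t) \<le> H * (integral {0..d} w + d * w d)"
proof -
  define A where "A = (\<lambda>r. kernel r (h (t - r)))"
  define B where "B = (\<lambda>r. Sm (max r d) (h (max 0 (t - r))))"
  define c where "c = min d t"
  have c: "0 \<le> c" "c \<le> t" "c \<le> d" using d t by (auto simp: c_def)
  have H0: "0 \<le> H" using H[of t] t norm_ge_zero order.trans by blast
  have ht: "continuous_on {0..t} h" by (rule continuous_on_subset[OF h]) (use t in auto)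
  have Ht: "\<And>s. s \<in> {0..t} \<Longrightarrow> norm (h s) \<le> H" using t by (intro H) auto
  have "integral {c..t} A = integral {c..t} B"
    by (rule integral_spike[of "{t}"]) (use d in \<open>auto simp: A_def B_def kernel_def c_def\<close>)
  moreover have "duhamel h t = integral {0..c} A + integral {c..t} A"
    unfolding duhamel_def A_def[symmetric] using integrable_kernel_integrand[OF _ order.refl ht] c
    by (intro Henstock_Kurzweil_Integration.integral_combine[symmetric]) (simp_all add: A_def)
  moreover have "truncated_duhamel d h t = integral {0..c} B + integral {c..t} B"
    unfolding truncated_duhamel_def B_def[symmetric]
    by (rule Henstock_Kurzweil_Integration.integral_combine[symmetric, OF c(1,2)])
       (simp add: B_def truncated_integrand_integrable[OF d t h])
  ultimately have "norm (duhamel h t - truncated_duhamel d h t)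
      \<le> norm (integral {0..c} A) + norm (integral {0..c} B)"
    by (simp add: norm_triangle_ineq4)
  also have "norm (integral {0..c} A) \<le> H * integral {0..d} w"
    unfolding A_def
    using kernel_integrand_integrable_bound(2)[OF c(1,2) ht Ht] integral_w_mono[OF c(1,3)] H0
    by (meson mult_left_mono order.trans)
  also have "norm (integral {0..c} B) \<le> d * w d * H"
    unfolding B_def by (rule norm_integral_truncated_integrand_le[OF d c(1,3,2) t h H])
  finally show ?thesis by (simp add: algebra_simps)
qed

lemma continuous_on_duhamel:
  assumes h: "continuous_on {0..b} h"
  shows "continuous_on {0..b} (duhamel h)"
proof -
  obtain H where H: "\<And>s. s \<in> {0..b} \<Longrightarrow> norm (h s) \<le> H"
    using continuous_on_Icc_norm_bounded[OF h] by blast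
  have "uniform_limit {0..b} (\<lambda>d. truncated_duhamel d h) (duhamel h) (at_right 0)"
    unfolding uniform_limit_iff
  proof (intro allI impI)
    fix e :: real assume "e > 0"
    have "\<forall>\<^sub>F d in at_right 0. H * (integral {0..d} w + d * w d) < e"
      using order_tendstoD(2)[OF tendsto_mult_right_zero[OF w_tendsto_0] \<open>e > 0\<close>] .
    moreover have "\<forall>\<^sub>F d in at_right (0::real). d > 0" by (simp add: eventually_at_right_less)
    ultimately show "\<forall>\<^sub>F d in at_right 0. \<forall>t\<in>{0..b}. dist (truncated_duhamel d h t) (duhamel h t) < e"
    proof eventually_elim
      case (elim d)
      then show ?case
        using truncated_duhamel_error[OF _ _ h H] by (fastforce simp: dist_norm norm_minus_commute)
    qed
  qed
  then show ?thesis
    by (rule uniform_limit_theorem[rotated])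
       (auto intro: eventually_mono[OF eventually_at_right_less] continuous_on_truncated_duhamel[OF _ h])
qed

end

section \<open>Picard iteration\<close>

text \<open>In the paper's notation: \<open>i\<close> is the embedding of \<open>F\<close> into \<open>F\<^sub>-\<close>, \<open>S\<close> the semigroup
  generated by \<open>\<A>\<close> on \<open>F\<^sub>-\<close>, \<open>SF\<close> and \<open>Sm\<close> its actions \<open>F \<rightarrow> F\<close> and \<open>F\<^sub>- \<rightarrow> F\<close>, and
  \<open>w\<close>, \<open>U\<close>, \<open>Xi\<close> stand for \<open>u\<^sub>-\<close>, \<open>\<U>\<close>, \<open>\<Xi>\<^sub>-\<close>.\<close>

locale quadratic_mild_problem = smoothing_kernel Sm w \<sigma>
  for Sm :: "real \<Rightarrow> 'm::banach \<Rightarrow> 'f::banach" and w \<sigma> +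
  fixes i :: "'f \<Rightarrow> 'm"
    and S :: "real \<Rightarrow> 'm \<Rightarrow> 'm"
    and SF :: "real \<Rightarrow> 'f \<Rightarrow> 'f"
    and U Xi :: "real \<Rightarrow> real"
    and K :: real
    and P :: "'f \<Rightarrow> 'f \<Rightarrow> 'm"
    and \<xi> :: "real \<Rightarrow> 'm"
  assumes i_bounded_linear: "bounded_linear i"
    and Sm_eq: "\<And>t f. t > 0 \<Longrightarrow> i (Sm t f) = S t f"
    and SF_eq: "\<And>t f. t \<ge> 0 \<Longrightarrow> i (SF t f) = S t (i f)"
    and SF_continuous: "\<And>f. continuous_on {0..} (\<lambda>t. SF t f)"
    and SF_contraction: "\<And>t f. t \<ge> 0 \<Longrightarrow> norm (SF t f) \<le> norm f"
    and P_bilinear: "bounded_bilinear P"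
    and P_bound: "\<And>f g. norm (P f g) \<le> K * norm f * norm g"
    and K_nonneg: "0 \<le> K"
    and \<xi>_continuous: "continuous_on {0..} \<xi>"
    and U_mono: "mono_on {0..} U"
    and U_ge_integral_w: "\<And>t. t \<ge> 0 \<Longrightarrow> integral {0..t} w \<le> U t"
    and Xi_mono: "mono_on {0..} Xi"
    and \<xi>_le_Xi: "\<And>t. t \<ge> 0 \<Longrightarrow> norm (\<xi> t) \<le> Xi t"
begin

lemma integral_w_le_U:
  assumes "t \<in> {0..b}"
  shows "integral {0..t} w \<le> U b"
  using U_ge_integral_w[of t] mono_onD[OF U_mono, of t b] assms by auto

lemma U_nonneg: "0 \<le> b \<Longrightarrow> 0 \<le> U b"
  using integral_w_le_U[of 0 b] by simp

lemma Xi_nonneg: "0 \<le> b \<Longrightarrow> 0 \<le> Xi b"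
  using \<xi>_le_Xi[of b] norm_ge_zero order.trans by blast

lemma norm_duhamel_le_U:
  assumes t: "t \<in> {0..b}" and h: "continuous_on {0..t} h"
    and H: "\<And>s. s \<in> {0..t} \<Longrightarrow> norm (h s) \<le> H"
  shows "norm (duhamel h t) \<le> H * U b"
proof -
  have "norm (h t) \<le> H" using H t by simp
  then have "0 \<le> H" by (metis norm_ge_zero order.trans)
  have "norm (duhamel h t) \<le> H * integral {0..t} w"
    by (rule norm_duhamel_le[OF _ h H]) (use t in auto)
  also have "\<dots> \<le> H * U b"
    using integral_w_le_U[OF t] \<open>0 \<le> H\<close> by (rule mult_left_mono)
  finally show ?thesis .
qed

lemma duhamel_has_integral:
  assumes "0 \<le> t" "continuous_on {0..t} h"
  shows "((\<lambda>s. S (t - s) (h s)) has_integral i (duhamel h t)) {0..t}"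
proof -
  have "((i \<circ> (\<lambda>r. kernel r (h (t - r)))) has_integral i (duhamel h t)) {0..t}"
    unfolding duhamel_def
    by (rule has_integral_linear[OF integrable_integral i_bounded_linear])
       (rule integrable_kernel_integrand[OF assms(1) order.refl assms(2)])
  then have "((\<lambda>r. S r (h (t - r))) has_integral i (duhamel h t)) {0..t}"
    by (rule has_integral_spike_finite[of "{0}", rotated 2]) (auto simp: kernel_def Sm_eq)
  from has_integral_reflect_Icc[OF this] show ?thesis by simp
qed

definition quad_source :: "(real \<Rightarrow> 'f) \<Rightarrow> real \<Rightarrow> 'm" where
  "quad_source g s = P (g s) (g s) + \<xi> s"

lemma continuous_on_quad_source:
  assumes "continuous_on {0..b} g"
  shows "continuous_on {0..b} (quad_source g)"
proof -
  have "continuous_on {0..b} \<xi>" by (rule continuous_on_subset[OF \<xi>_continuous]) auto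
  then show ?thesis
    unfolding quad_source_def
    by (intro continuous_intros bounded_bilinear.continuous_on[OF P_bilinear] assms)
qed

lemma norm_quad_source_le:
  assumes s: "s \<in> {0..b}" and g: "norm (g s) \<le> m"
  shows "norm (quad_source g s) \<le> K * m^2 + Xi b"
proof -
  have "norm (quad_source g s) \<le> norm (P (g s) (g s)) + norm (\<xi> s)"
    unfolding quad_source_def by (rule norm_triangle_ineq)
  also have "\<dots> \<le> K * norm (g s) * norm (g s) + Xi s"
    using s by (intro add_mono P_bound \<xi>_le_Xi) auto
  also have "K * norm (g s) * norm (g s) \<le> K * m^2"
    using g K_nonneg by (simp add: power2_eq_square mult.assoc mult_mono' mult_left_mono)
  also have "Xi s \<le> Xi b" using s by (intro mono_onD[OF Xi_mono]) auto
  finally show ?thesis by simp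
qed

lemma norm_quad_source_diff_le:
  "norm (quad_source g s - quad_source g' s)
     \<le> K * (norm (g s) + norm (g' s)) * norm (g s - g' s)"
proof -
  interpret bb: bounded_bilinear P by (rule P_bilinear)
  have "quad_source g s - quad_source g' s = P (g s) (g s - g' s) + P (g s - g' s) (g' s)"
    by (simp add: quad_source_def bb.diff_left bb.diff_right)
  also have "norm \<dots> \<le> K * norm (g s) * norm (g s - g' s) + K * norm (g s - g' s) * norm (g' s)"
    by (intro order.trans[OF norm_triangle_ineq] add_mono P_bound)
  finally show ?thesis by (simp add: algebra_simps)
qed

definition data_bound :: "'f \<Rightarrow> real \<Rightarrow> real" where
  "data_bound f0 b = norm f0 + Xi b * U b"

definition picard_step :: "'f \<Rightarrow> (real \<Rightarrow> 'f) \<Rightarrow> real \<Rightarrow> 'f" where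
  "picard_step f0 g t = SF t f0 + duhamel (quad_source g) t"

definition picard_iter :: "'f \<Rightarrow> nat \<Rightarrow> real \<Rightarrow> 'f" where
  "picard_iter f0 n = (picard_step f0 ^^ n) (\<lambda>_. 0)"

abbreviation majorant :: "'f \<Rightarrow> real \<Rightarrow> nat \<Rightarrow> real" where
  "majorant f0 b \<equiv> quad_iter (data_bound f0 b) (K * U b)"

lemma picard_iter_Suc: "picard_iter f0 (Suc n) = picard_step f0 (picard_iter f0 n)"
  by (simp add: picard_iter_def)

lemma data_bound_nonneg: "0 \<le> b \<Longrightarrow> 0 \<le> data_bound f0 b"
  by (simp add: data_bound_def Xi_nonneg U_nonneg)

lemma continuous_on_picard_step:
  assumes "continuous_on {0..b} g"
  shows "continuous_on {0..b} (picard_step f0 g)"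
proof -
  have "continuous_on {0..b} (\<lambda>t. SF t f0)" by (rule continuous_on_subset[OF SF_continuous]) auto
  then show ?thesis
    unfolding picard_step_def
    by (intro continuous_on_add continuous_on_duhamel continuous_on_quad_source assms)
qed

lemma norm_picard_step_le:
  assumes t: "t \<in> {0..b}" and g: "continuous_on {0..b} g" "\<And>s. s \<in> {0..b} \<Longrightarrow> norm (g s) \<le> m"
  shows "norm (picard_step f0 g t) \<le> data_bound f0 b + K * U b * m^2"
proof -
  have "norm (duhamel (quad_source g) t) \<le> (K * m^2 + Xi b) * U b"
  proof (rule norm_duhamel_le_U[OF t])
    show "continuous_on {0..t} (quad_source g)"
      by (rule continuous_on_quad_source, rule continuous_on_subset[OF g(1)]) (use t in auto)
    show "norm (quad_source g s) \<le> K * m^2 + Xi b" if "s \<in> {0..t}" for s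
      by (rule norm_quad_source_le[of s b]) (use t that g(2)[of s] in auto)
  qed
  moreover have "norm (SF t f0) \<le> norm f0" using t SF_contraction by auto
  ultimately have "norm (SF t f0) + norm (duhamel (quad_source g) t) \<le> data_bound f0 b + K * U b * m^2"
    by (simp add: data_bound_def algebra_simps)
  then show ?thesis
    unfolding picard_step_def by (rule order.trans[OF norm_triangle_ineq])
qed

lemma norm_picard_step_diff_le:
  assumes t: "t \<in> {0..b}" and g: "continuous_on {0..b} g" "continuous_on {0..b} g'"
    and m: "\<And>s. s \<in> {0..b} \<Longrightarrow> norm (g s) \<le> m" "\<And>s. s \<in> {0..b} \<Longrightarrow> norm (g' s) \<le> m'"
    and \<delta>: "\<And>s. s \<in> {0..b} \<Longrightarrow> norm (g s - g' s) \<le> \<delta>"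
  shows "norm (picard_step f0 g t - picard_step f0 g' t) \<le> K * (m + m') * \<delta> * U b"
proof -
  have sub: "{0..t} \<subseteq> {0..b}" using t by auto
  have c: "continuous_on {0..t} (quad_source g)" "continuous_on {0..t} (quad_source g')"
    using continuous_on_quad_source continuous_on_subset[OF g(1) sub] continuous_on_subset[OF g(2) sub]
    by blast+
  have "0 \<le> m + m'" using m[OF t] by (metis add_mono norm_ge_zero order.trans add_0)
  have "picard_step f0 g t - picard_step f0 g' t = duhamel (\<lambda>s. quad_source g s - quad_source g' s) t"
    using duhamel_diff[OF _ c] t by (simp add: picard_step_def)
  also have "norm \<dots> \<le> K * (m + m') * \<delta> * U b"
  proof (rule norm_duhamel_le_U[OF t continuous_on_diff[OF c]])
    fix s assume "s \<in> {0..t}"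
    then have s: "s \<in> {0..b}" using sub by auto
    have "norm (quad_source g s - quad_source g' s) \<le> K * (norm (g s) + norm (g' s)) * norm (g s - g' s)"
      by (rule norm_quad_source_diff_le)
    also have "\<dots> \<le> K * (m + m') * \<delta>"
      using m[OF s] \<delta>[OF s] K_nonneg \<open>0 \<le> m + m'\<close>
      by (intro mult_mono mult_left_mono add_mono) auto
    finally show "norm (quad_source g s - quad_source g' s) \<le> K * (m + m') * \<delta>" .
  qed
  finally show ?thesis .
qed

lemma picard_iter_bounded:
  assumes b: "0 \<le> b"
  shows "continuous_on {0..b} (picard_iter f0 n) \<and>
    (\<forall>t\<in>{0..b}. norm (picard_iter f0 n t) \<le> majorant f0 b n)"
proof (induction n)
  case (Suc n)
  then have g: "continuous_on {0..b} (picard_iter f0 n)"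
    "\<And>t. t \<in> {0..b} \<Longrightarrow> norm (picard_iter f0 n t) \<le> majorant f0 b n"
    by blast+
  show ?case
    using norm_picard_step_le[OF _ g] continuous_on_picard_step[OF g(1)]
    by (simp add: picard_iter_Suc quad_iter_Suc)
qed (simp add: picard_iter_def)

lemma picard_iter_increment:
  assumes b: "0 \<le> b" and t: "t \<in> {0..b}"
  shows "norm (picard_iter f0 (Suc n) t - picard_iter f0 n t) \<le> majorant f0 b (Suc n) - majorant f0 b n"
  using t
proof (induction n arbitrary: t)
  case 0
  have "picard_iter f0 0 = (\<lambda>_. 0)" by (simp add: picard_iter_def)
  then show ?case using picard_iter_bounded[OF b, of f0 "Suc 0"] 0 by simp
next
  case (Suc n)
  let ?m1 = "majorant f0 b (Suc n)" and ?m0 = "majorant f0 b n"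
  have g1: "continuous_on {0..b} (picard_iter f0 (Suc n))"
      "\<And>s. s \<in> {0..b} \<Longrightarrow> norm (picard_iter f0 (Suc n) s) \<le> ?m1"
    and g0: "continuous_on {0..b} (picard_iter f0 n)"
      "\<And>s. s \<in> {0..b} \<Longrightarrow> norm (picard_iter f0 n s) \<le> ?m0"
    using picard_iter_bounded[OF b] by blast+
  have "norm (picard_step f0 (picard_iter f0 (Suc n)) t - picard_step f0 (picard_iter f0 n) t)
      \<le> K * (?m1 + ?m0) * (?m1 - ?m0) * U b"
    by (rule norm_picard_step_diff_le[OF Suc.prems g1(1) g0(1) g1(2) g0(2) Suc.IH])
  also have "\<dots> = majorant f0 b (Suc (Suc n)) - ?m1"
    unfolding quad_iter_Suc[of _ _ "Suc n"] quad_iter_Suc[of _ _ n]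
    by (simp add: power2_eq_square algebra_simps)
  finally show ?case by (simp only: picard_iter_Suc)
qed

definition picard_limit :: "'f \<Rightarrow> real \<Rightarrow> 'f" where
  "picard_limit f0 t = lim (\<lambda>n. picard_iter f0 n t)"

definition apriori_bound :: "'f \<Rightarrow> real \<Rightarrow> real" where
  "apriori_bound f0 b = data_bound f0 b * chiX (4 * K * U b * data_bound f0 b)"

context
  fixes f0 :: 'f and b :: real
  assumes b: "0 \<le> b" and small: "4 * K * U b * data_bound f0 b \<le> 1"
begin

lemma majorant_le_apriori_bound: "majorant f0 b n \<le> apriori_bound f0 b"
  using quad_iter_le_chiX[OF data_bound_nonneg[OF b] mult_nonneg_nonneg[OF K_nonneg U_nonneg[OF b]]]
    small
  by (simp add: apriori_bound_def mult.assoc)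

lemma uniform_limit_picard_iter:
  "uniform_limit {0..b} (picard_iter f0) (picard_limit f0) sequentially"
proof -
  have "convergent (majorant f0 b)"
    by (rule convergent_quad_iter)
       (use small data_bound_nonneg[OF b] K_nonneg U_nonneg[OF b] in \<open>simp_all add: mult.assoc\<close>)
  then show ?thesis
    unfolding picard_limit_def[abs_def]
    by (intro uniform_limit_if_increments_telescope[where m = "majorant f0 b"] picard_iter_increment[OF b])
qed

lemma continuous_on_picard_limit: "continuous_on {0..b} (picard_limit f0)"
  using picard_iter_bounded[OF b]
  by (intro uniform_limit_theorem[OF _ uniform_limit_picard_iter]) auto

lemma norm_picard_limit_le:
  assumes t: "t \<in> {0..b}"
  shows "norm (picard_limit f0 t) \<le> apriori_bound f0 b"
proof (rule Lim_bounded[of _ _ 0])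
  show "(\<lambda>n. norm (picard_iter f0 n t)) \<longlonglongrightarrow> norm (picard_limit f0 t)"
    by (intro tendsto_norm tendsto_uniform_limitI[OF uniform_limit_picard_iter t])
  show "\<forall>n\<ge>0. norm (picard_iter f0 n t) \<le> apriori_bound f0 b"
    using picard_iter_bounded[OF b] t majorant_le_apriori_bound by (meson order.trans)
qed

lemma picard_limit_fixed_point:
  assumes t: "t \<in> {0..b}"
  shows "picard_limit f0 t = picard_step f0 (picard_limit f0) t"
proof -
  have sub: "{0..t} \<subseteq> {0..b}" using t by auto
  let ?\<phi> = "picard_limit f0"
  have c\<phi>: "continuous_on {0..t} ?\<phi>" by (rule continuous_on_subset[OF continuous_on_picard_limit sub])
  have cn: "continuous_on {0..t} (picard_iter f0 n)" for n
    using picard_iter_bounded[OF b] continuous_on_subset[OF _ sub] by blast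
  have u: "uniform_limit {0..t} (picard_iter f0) ?\<phi> sequentially"
    by (rule uniform_limit_on_subset[OF uniform_limit_picard_iter sub])
  have "bounded (?\<phi> ` {0..t})"
    by (rule compact_imp_bounded[OF compact_continuous_image[OF c\<phi> compact_Icc]])
  then have "uniform_limit {0..t} (\<lambda>n. quad_source (picard_iter f0 n)) (quad_source ?\<phi>) sequentially"
    unfolding quad_source_def
    by (intro uniform_limit_add uniform_limit_const bounded_bilinear.bounded_uniform_limit[OF P_bilinear u u])
  then have "(\<lambda>n. duhamel (quad_source (picard_iter f0 n)) t) \<longlonglongrightarrow> duhamel (quad_source ?\<phi>) t"
    using t by (intro duhamel_tendsto_if_uniform_limit continuous_on_quad_source cn c\<phi>) auto
  then have "(\<lambda>n. picard_iter f0 (Suc n) t) \<longlonglongrightarrow> picard_step f0 ?\<phi> t"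
    unfolding picard_iter_Suc picard_step_def by (intro tendsto_add tendsto_const)
  moreover have "(\<lambda>n. picard_iter f0 (Suc n) t) \<longlonglongrightarrow> ?\<phi> t"
    using LIMSEQ_Suc[OF tendsto_uniform_limitI[OF uniform_limit_picard_iter t]] .
  ultimately show ?thesis using LIMSEQ_unique by blast
qed

lemma picard_limit_mild_solution:
  "((\<lambda>s. S (b - s) (quad_source (picard_limit f0) s))
     has_integral (i (picard_limit f0 b) - S b (i f0))) {0..b}"
proof -
  have "i (picard_limit f0 b) - S b (i f0) = i (duhamel (quad_source (picard_limit f0)) b)"
    using picard_limit_fixed_point[of b] b SF_eq[OF b, of f0]
    by (simp add: picard_step_def linear_add[OF bounded_linear.linear[OF i_bounded_linear]])
  then show ?thesis
    using duhamel_has_integral[OF b continuous_on_quad_source[OF continuous_on_picard_limit]] by simp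
qed

end

lemma continuous_on_picard_limit_before:
  assumes "\<And>t. 0 \<le> t \<Longrightarrow> ereal t < T \<Longrightarrow> 4 * K * U t * data_bound f0 t \<le> 1"
  shows "continuous_on {t. 0 \<le> t \<and> ereal t < T} (picard_limit f0)"
proof (rule continuous_on_if_continuous_on_initial_segments)
  fix t assume "t \<in> {t. 0 \<le> t \<and> ereal t < T}"
  then obtain b where b: "ereal t < ereal b" "ereal b < T" "0 \<le> t"
    using ereal_dense2 by force
  then have "{t. 0 \<le> t \<and> ereal t < T} \<inter> {..<b} = {0..<b}"
    by (auto intro: order.strict_trans[of _ "ereal b"])
  with b assms[of b] continuous_on_picard_limit[of b f0]
  show "\<exists>b>t. {t. 0 \<le> t \<and> ereal t < T} \<inter> {..<b} = {0..<b} \<and> continuous_on {0..b} (picard_limit f0)"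
    by (intro exI[of _ b]) auto
qed

end

lemma continuous_on_if_locally_lipschitz_nonneg:
  assumes "locally_lipschitz_nonneg \<xi>"
  shows "continuous_on {0..} \<xi>"
proof (rule continuous_on_if_continuous_on_initial_segments)
  fix t :: real assume "t \<in> {0..}"
  then obtain L where L: "\<forall>s\<in>{0..t+1}. \<forall>r\<in>{0..t+1}. norm (\<xi> s - \<xi> r) \<le> L * \<bar>s - r\<bar>"
    using assms unfolding locally_lipschitz_nonneg_def by (meson atLeast_iff add_nonneg_nonneg zero_le_one)
  have "(max 0 L)-lipschitz_on {0..t+1} \<xi>"
  proof (rule lipschitz_onI)
    fix s r assume "s \<in> {0..t+1}" "r \<in> {0..t+1}"
    then have "norm (\<xi> s - \<xi> r) \<le> L * \<bar>s - r\<bar>" using L by blast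
    also have "\<dots> \<le> max 0 L * \<bar>s - r\<bar>" by (intro mult_right_mono) auto
    finally show "dist (\<xi> s) (\<xi> r) \<le> max 0 L * dist s r" by (simp add: dist_norm dist_real_def)
  qed simp
  then have "continuous_on {0..t+1} \<xi>" by (rule lipschitz_on_continuous_on)
  then show "\<exists>b>t. {0..} \<inter> {..<b} = {0..<b} \<and> continuous_on {0..b} \<xi>"
    by (intro exI[of _ "t + 1"]) auto
qed

lemma linear_if_comp_injective:
  assumes "linear g" "inj g" "linear h" "\<And>x. g (f x) = h x"
  shows "linear f"
proof -
  interpret g: linear g by fact
  interpret h: linear h by fact
  show ?thesis
    by (rule linearI; rule injD[OF \<open>inj g\<close>]) (simp_all add: assms(4) g.add g.scale h.add h.scale)
qed

lemma bounded_bilinear_if_linear_bounded: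
  assumes "\<And>f. linear (P f)" "\<And>g. linear (\<lambda>f. P f g)" "\<And>f g. norm (P f g) \<le> K * norm f * norm g"
  shows "bounded_bilinear P"
proof
  fix a a' b b' and r :: real
  show "P (a + a') b = P a b + P a' b" using linear_add[OF assms(2)] by simp
  show "P a (b + b') = P a b + P a b'" using linear_add[OF assms(1)] by simp
  show "P (r *\<^sub>R a) b = r *\<^sub>R P a b" using linear_scale[OF assms(2)] by simp
  show "P a (r *\<^sub>R b) = r *\<^sub>R P a b" using linear_scale[OF assms(1)] by simp
  show "\<exists>K. \<forall>a b. norm (P a b) \<le> norm a * norm b * K"
    using assms(3) by (intro exI[of _ K]) (simp add: algebra_simps)
qed

lemma ereal_le_ext_val:
  assumes g: "mono_on {0..} g" and t: "0 \<le> t" "ereal t < T"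
  shows "ereal (g t) \<le> ext_val g T"
proof (cases T)
  case (real r)
  with t g show ?thesis by (auto simp: ext_val_def intro: mono_onD)
qed (use t in \<open>auto simp: ext_val_def intro: SUP_upper\<close>)

lemma smallness_before_horizon:
  assumes K: "0 \<le> K" and a: "0 \<le> a"
    and U: "mono_on {0..} U" "\<And>t. t \<ge> 0 \<Longrightarrow> U t \<ge> 0"
    and Xi: "mono_on {0..} Xi" "\<And>t. t \<ge> 0 \<Longrightarrow> Xi t \<ge> 0"
    and small: "ereal (4 * K) * ext_val U T * (ereal a + ext_val Xi T * ext_val U T) \<le> 1"
    and t: "0 \<le> t" "ereal t < T"
  shows "4 * K * U t * (a + Xi t * U t) \<le> 1"
proof -
  have eU: "ereal (U t) \<le> ext_val U T" and eXi: "ereal (Xi t) \<le> ext_val Xi T"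
    using ereal_le_ext_val[OF U(1) t] ereal_le_ext_val[OF Xi(1) t] .
  have A: "ereal a + ereal (Xi t) * ereal (U t) \<le> ereal a + ext_val Xi T * ext_val U T"
    by (intro add_left_mono ereal_mult_mono' eU eXi) (use U(2) Xi(2) t in auto)
  have B: "ereal (4 * K) * ereal (U t) \<le> ereal (4 * K) * ext_val U T"
    by (intro ereal_mult_left_mono eU) (use K in auto)
  have "ereal (4 * K) * ereal (U t) * (ereal a + ereal (Xi t) * ereal (U t))
      \<le> ereal (4 * K) * ext_val U T * (ereal a + ext_val Xi T * ext_val U T)"
    by (rule ereal_mult_mono'[OF _ _ B A]) (use K a U(2)[OF t(1)] Xi(2)[OF t(1)] in simp_all)
  also note small
  finally show ?thesis by simp
qed

theorem proposition5p9:
  fixes i1 :: "'p::banach \<Rightarrow> 'f::banach"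
    and i2 :: "'f \<Rightarrow> 'm::banach"
    and A :: "'p \<Rightarrow> 'm"
    and S :: "real \<Rightarrow> 'm \<Rightarrow> 'm"
    and SF :: "real \<Rightarrow> 'f \<Rightarrow> 'f"
    and SmF :: "real \<Rightarrow> 'm \<Rightarrow> 'f"
    and u um U Xi :: "real \<Rightarrow> real"
    and \<sigma> K :: real
    and P :: "'f \<Rightarrow> 'f \<Rightarrow> 'm"
    and \<xi> :: "real \<Rightarrow> 'm"
    and f0 :: 'f
    and T :: ereal
  assumes i1: "bounded_linear i1" "inj i1" "closure (range i1) = UNIV"
    and i2: "bounded_linear i2" "inj i2" "closure (range i2) = UNIV"
    and A_lin: "linear A"
    and A_norm: "\<exists>c1>0. \<exists>c2>0. \<forall>f. c1 * norm f \<le> norm (i2 (i1 f)) + norm (A f)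
                                   \<and> norm (i2 (i1 f)) + norm (A f) \<le> c2 * norm f"
    and S_sg: "sc_semigroup S"
    and S_dom: "\<forall>x. (\<exists>y. gen_at S x y) \<longleftrightarrow> x \<in> range (i2 \<circ> i1)"
    and S_gen: "\<forall>f. gen_at S (i2 (i1 f)) (A f)"
    and SF: "\<forall>t\<ge>0. \<forall>f. i2 (SF t f) = S t (i2 f)"
    and SF_cont: "continuous_on (UNIV \<times> {0..}) (\<lambda>(f, t). SF t f)"
    and u: "continuous_on {0..} u" "\<forall>t\<ge>0. u t > 0"
    and SF_bound: "\<forall>t\<ge>0. \<forall>f. norm (SF t f) \<le> u t * norm f"
    and SmF: "\<forall>t>0. \<forall>f. i2 (SmF t f) = S t f"
    and SmF_cont: "continuous_on (UNIV \<times> {0<..}) (\<lambda>(f, t). SmF t f)"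
    and um: "continuous_on {0<..} um" "\<forall>t>0. um t > 0"
    and SmF_bound: "\<forall>t>0. \<forall>f. norm (SmF t f) \<le> um t * norm f"
    and sigma: "0 < \<sigma>" "\<sigma> \<le> 1"
    and um_O: "um \<in> O[at_right 0](\<lambda>t. t powr (-(1 - \<sigma>)))"
    and K: "0 < K"
    and P_lin: "\<forall>f. linear (P f)" "\<forall>g. linear (\<lambda>f. P f g)"
    and P_bound: "\<forall>f g. norm (P f g) \<le> K * norm f * norm g"
    and \<xi>_lip: "locally_lipschitz_nonneg \<xi>"
    and U: "continuous_on {0..} U" "mono_on {0..} U" "\<forall>t\<ge>0. U t \<ge> 0" "U 0 = 0"
    and U_int: "\<forall>t\<ge>0. integral {0..t} um \<le> U t"
    and Xi: "continuous_on {0..} Xi" "mono_on {0..} Xi" "\<forall>t\<ge>0. Xi t \<ge> 0"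
    and Xi_bound: "\<forall>t\<ge>0. norm (\<xi> t) \<le> Xi t"
    and u_le1: "\<forall>t\<ge>0. u t \<le> 1"
    and T: "0 < T"
    and small: "ereal (4 * K) * ext_val U T * (ereal (norm f0) + ext_val Xi T * ext_val U T) \<le> 1"
  shows "\<exists>\<phi> :: real \<Rightarrow> 'f.
           continuous_on {t. 0 \<le> t \<and> ereal t < T} \<phi> \<and>
           (\<forall>t. 0 \<le> t \<and> ereal t < T \<longrightarrow>
              ((\<lambda>s. S (t - s) (P (\<phi> s) (\<phi> s) + \<xi> s)) has_integral (i2 (\<phi> t) - S t (i2 f0))) {0..t}
            \<and> norm (\<phi> t) \<le> (norm f0 + Xi t * U t) * chiX (4 * K * U t * (norm f0 + Xi t * U t)))"
proof -
  have S_linear: "linear (S t)" if "t \<ge> 0" for t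
    using S_sg that unfolding sc_semigroup_def by (auto intro: bounded_linear.linear)
  interpret quadratic_mild_problem SmF um \<sigma> i2 S SF U Xi K P \<xi>
  proof (intro quadratic_mild_problem.intro smoothing_kernel.intro quadratic_mild_problem_axioms.intro)
    show "linear (SmF t)" if "t > 0" for t
      using SmF that by (intro linear_if_comp_injective[OF bounded_linear.linear[OF i2(1)] i2(2) S_linear]) auto
    show "continuous_on {0..} (\<lambda>t. SF t f)" for f
      by (rule continuous_on_compose2[OF SF_cont, of _ "\<lambda>t. (f, t)", simplified]) (auto intro!: continuous_intros)
    show "norm (SF t f) \<le> norm f" if "t \<ge> 0" for t f
      using SF_bound u u_le1 that by (meson less_imp_le mult_left_le_one_le norm_ge_zero order.trans)
    show "bounded_bilinear P" using P_lin P_bound by (intro bounded_bilinear_if_linear_bounded) auto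
  qed (use i2(1) SmF SF SmF_cont SmF_bound um sigma um_O K P_bound \<xi>_lip U U_int Xi Xi_bound
       in \<open>auto intro: continuous_on_if_locally_lipschitz_nonneg\<close>)
  have small_before_T: "4 * K * U t * data_bound f0 t \<le> 1" if "0 \<le> t" "ereal t < T" for t
    unfolding data_bound_def using K U Xi that by (intro smallness_before_horizon[OF _ _ _ _ _ _ small]) auto
  show ?thesis
    using continuous_on_picard_limit_before[OF small_before_T]
      picard_limit_mild_solution[OF _ small_before_T] norm_picard_limit_le[OF _ small_before_T]
    by (intro exI[of _ "picard_limit f0"]) (auto simp: quad_source_def apriori_bound_def data_bound_def)
qed

end
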